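(* Let $q$ be a probability density on $\mathbb{R}^d$, let $\mathcal{K}:\mathbb{R}^d\times\mathbb{R}^d\to\mathbb{R}$ be a symmetric, positive semi-definite, twice continuously differentiable kernel, and let $\bm{x}^1,\dots,\bm{x}^K\in\mathbb{R}^d$ be samples from $q$. Define the kernel matrix $\mathbf{K}\in\mathbb{R}^{K\times K}$ by $\mathbf{K}_{ij}=\mathcal{K}(\bm{x}^i,\bm{x}^j)$ and the matrix $\langle \nabla,\mathbf{K}\rangle\in\mathbb{R}^{K\times d}$ by $\langle \nabla,\mathbf{K}\rangle_{ij}=\sum_{k=1}^K \frac{\partial}{\partial x^k_j}\mathcal{K}(\bm{x}^i,\bm{x}^k)$, where $x^k_j$ is the $j$-th coordinate of $\bm{x}^k$. Let $\eta\ge 0$ be such that $\mathbf{K}+\eta\mathbf{I}$ is invertible, and define the Stein gradient estimator $$\hat{\mathbf{G}}^{\mathrm{Stein}}_V := -(\mathbf{K}+\eta\mathbf{I})^{-1}\langle\nabla,\mathbf{K}\rangle\in\mathbb{R}^{K\times d}.$$ For a matrix $\hat{\mathbf{G}}\in\mathbb{R}^{K\times d}$, write $\hat{\bm{g}}(\bm{x}^k)\in\mathbb{R}^{d}$ for (the transpose of) its $k$-th row, and define the V-statistic of the kernelised Stein discrepancy $$\mathcal{S}_V^2(q,\hat q) := \frac{1}{K^2}\sum_{j=1}^K\sum_{l=1}^K\Big[\hat{\bm{g}}(\bm{x}^j)^{\mathrm T}\mathbf{K}_{jl}\hat{\bm{g}}(\bm{x}^l)+\hat{\bm{g}}(\bm{x}^j)^{\mathrm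 T}\nabla_{\bm{x}^l}\mathcal{K}(\bm{x}^j,\bm{x}^l)+\nabla_{\bm{x}^j}\mathcal{K}(\bm{x}^j,\bm{x}^l)^{\mathrm T}\hat{\bm{g}}(\bm{x}^l)+\mathrm{Tr}\big(\nabla_{\bm{x}^j,\bm{x}^l}\mathcal{K}(\bm{x}^j,\bm{x}^l)\big)\Big],$$ where $\nabla_{\bm{x}^j,\bm{x}^l}\mathcal{K}(\bm{x}^j,\bm{x}^l)$ is the $d\times d$ matrix of mixed second partial derivatives. Then $$\hat{\mathbf{G}}^{\mathrm{Stein}}_V=\operatorname*{argmin}_{\hat{\mathbf{G}}\in\mathbb{R}^{K\times d}}\ \mathcal{S}_V^2(q,\hat q)+\frac{\eta}{K^2}\|\hat{\mathbf{G}}\|_F^2,$$ where $\|\cdot\|_F$ is the Frobenius norm.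
   Context: Here $\hat{\mathbf{G}}$ is viewed as an approximation of the matrix whose $k$-th row is $\nabla_{\bm{x}}\log q(\bm{x}^k)^{\mathrm T}$, i.e. $\hat{\bm{g}}(\bm{x}^k)$ plays the role of $\nabla_{\bm{x}}\log\hat q(\bm{x}^k)$ for some approximating density $\hat q$; the objective depends on $\hat q$ only through the values $\hat{\bm{g}}(\bm{x}^k)$, $k=1,\dots,K$. *)

theory Defs
  imports "HOL-Analysis.Analysis"
begin

definition kernel_C2 :: "(real^'d \<Rightarrow> real^'d \<Rightarrow> real) \<Rightarrow> bool" where
  "kernel_C2 \<kappa> \<longleftrightarrow>
     (\<exists>D D2. (\<forall>z. ((\<lambda>p. \<kappa> (fst p) (snd p)) has_derivative blinfun_apply (D z)) (at z))
           \<and> (\<forall>z. (D has_derivative blinfun_apply (D2 z)) (at z))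
           \<and> continuous_on UNIV D2)"

definition kernel_symmetric :: "('a \<Rightarrow> 'a \<Rightarrow> real) \<Rightarrow> bool" where
  "kernel_symmetric \<kappa> \<longleftrightarrow> (\<forall>a b. \<kappa> a b = \<kappa> b a)"

definition kernel_psd :: "('a \<Rightarrow> 'a \<Rightarrow> real) \<Rightarrow> bool" where
  "kernel_psd \<kappa> \<longleftrightarrow>
     (\<forall>(n::nat) (xs::nat \<Rightarrow> 'a) (c::nat \<Rightarrow> real).
        (\<Sum>i<n. \<Sum>j<n. c i * c j * \<kappa> (xs i) (xs j)) \<ge> 0)"

definition grad1 :: "(real^'d \<Rightarrow> real^'d \<Rightarrow> real) \<Rightarrow> real^'d \<Rightarrow> real^'d \<Rightarrow> real^'d" where
  "grad1 \<kappa> a b = (\<chi> i. deriv (\<lambda>t. \<kappa> (a + t *\<^sub>R axis i 1) b) 0)"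

definition grad2 :: "(real^'d \<Rightarrow> real^'d \<Rightarrow> real) \<Rightarrow> real^'d \<Rightarrow> real^'d \<Rightarrow> real^'d" where
  "grad2 \<kappa> a b = (\<chi> i. deriv (\<lambda>t. \<kappa> a (b + t *\<^sub>R axis i 1)) 0)"

definition grad12 :: "(real^'d \<Rightarrow> real^'d \<Rightarrow> real) \<Rightarrow> real^'d \<Rightarrow> real^'d \<Rightarrow> real^'d^'d" where
  "grad12 \<kappa> a b = (\<chi> i j. deriv (\<lambda>s. grad2 \<kappa> (a + s *\<^sub>R axis i 1) b $ j) 0)"

definition mtrace :: "real^'n^'n \<Rightarrow> real" where
  "mtrace A = (\<Sum>i\<in>UNIV. A $ i $ i)"

definition kmat :: "(real^'d \<Rightarrow> real^'d \<Rightarrow> real) \<Rightarrow> ('k::finite \<Rightarrow> real^'d) \<Rightarrow> real^'k^'k" where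
  "kmat \<kappa> x = (\<chi> i j. \<kappa> (x i) (x j))"

definition nabla_kmat :: "(real^'d \<Rightarrow> real^'d \<Rightarrow> real) \<Rightarrow> ('k::finite \<Rightarrow> real^'d) \<Rightarrow> real^'d^'k" where
  "nabla_kmat \<kappa> x = (\<chi> i j. \<Sum>k\<in>UNIV. grad2 \<kappa> (x i) (x k) $ j)"

definition stein_estimator ::
  "(real^'d \<Rightarrow> real^'d \<Rightarrow> real) \<Rightarrow> ('k::finite \<Rightarrow> real^'d) \<Rightarrow> real \<Rightarrow> real^'d^'k" where
  "stein_estimator \<kappa> x \<eta> = - (matrix_inv (kmat \<kappa> x + \<eta> *\<^sub>R mat 1) ** nabla_kmat \<kappa> x)"

text \<open>V-statistic of the KSD; row k of G is G $ k (the vector g(x^k)).\<close>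
definition ksd_V :: "(real^'d \<Rightarrow> real^'d \<Rightarrow> real) \<Rightarrow> ('k::finite \<Rightarrow> real^'d) \<Rightarrow> real^'d^'k \<Rightarrow> real" where
  "ksd_V \<kappa> x G = (1 / (real CARD('k))\<^sup>2) *
     (\<Sum>j\<in>UNIV. \<Sum>l\<in>UNIV.
        (G $ j) \<bullet> (kmat \<kappa> x $ j $ l *\<^sub>R G $ l)
        + (G $ j) \<bullet> grad2 \<kappa> (x j) (x l)
        + grad1 \<kappa> (x j) (x l) \<bullet> (G $ l)
        + mtrace (grad12 \<kappa> (x j) (x l)))"

definition frob_sq :: "real^'n^'m \<Rightarrow> real" where
  "frob_sq A = (\<Sum>i\<in>UNIV. \<Sum>j\<in>UNIV. (A $ i $ j)\<^sup>2)"

definition argmin_set :: "('a \<Rightarrow> real) \<Rightarrow> 'a set" where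
  "argmin_set f = {x. \<forall>y. f x \<le> f y}"

end

theory Submission
  imports Defs
begin

text \<open>Up to the factor \<open>1/K\<^sup>2\<close> and an additive constant (the trace terms), the regularised
  V-statistic is the quadratic \<open>tr(G\<^sup>T A G) + 2 tr(G\<^sup>T \<langle>\<nabla>,K\<rangle>)\<close> in \<open>G\<close> with
  \<open>A = K + \<eta>I\<close>; the two cross terms coincide by symmetry of the kernel. Since \<open>A\<close> is symmetric,
  positive semi-definite and invertible, hence positive definite, completing the square shows that
  this quadratic has the unique minimiser \<open>G = -A\<^sup>-\<^sup>1\<langle>\<nabla>,K\<rangle>\<close>.\<close>

lemma nonneg_linear_plus_quadratic_imp_zero:
  fixes a b :: real
  assumes "b \<ge> 0" and "\<And>t. 0 \<le> a * t + b * t\<^sup>2"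
  shows "a = 0"
proof -
  have "a * (- a / (b + 1)) + b * (- a / (b + 1))\<^sup>2 = - a\<^sup>2 / (b + 1)\<^sup>2"
  proof -
    have "b + 1 \<noteq> 0" using \<open>b \<ge> 0\<close> by simp
    then show ?thesis by (simp add: divide_simps power2_eq_square) (simp add: algebra_simps)
  qed
  with assms(2) have "0 \<le> - a\<^sup>2 / (b + 1)\<^sup>2" by metis
  then have "a\<^sup>2 \<le> 0" using \<open>b \<ge> 0\<close> by (simp add: divide_le_0_iff)
  then show "a = 0" by simp
qed

lemma inner_matrix_vector_mult_commute:
  fixes A :: "real^'n^'n"
  assumes "transpose A = A"
  shows "u \<bullet> (A *v w) = w \<bullet> (A *v u)"
  by (metis assms dot_lmul_matrix inner_commute vector_transpose_matrix)

lemma psd_quadratic_form_eq_0_imp_mult_eq_0: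
  fixes A :: "real^'n^'n"
  assumes sym: "transpose A = A" and psd: "\<And>v. 0 \<le> v \<bullet> (A *v v)"
    and "v \<bullet> (A *v v) = 0"
  shows "A *v v = 0"
proof -
  define w where "w = A *v v"
  have "(v + t *\<^sub>R w) \<bullet> (A *v (v + t *\<^sub>R w)) = 2 * (w \<bullet> (A *v v)) * t + (w \<bullet> (A *v w)) * t\<^sup>2" for t
    using assms(3) inner_matrix_vector_mult_commute[OF sym, of v w]
    by (simp add: inner_add_left inner_add_right power2_eq_square algebra_simps)
  then have "2 * (w \<bullet> (A *v v)) = 0"
    using nonneg_linear_plus_quadratic_imp_zero[OF psd] psd by metis
  then show ?thesis by (simp add: w_def)
qed

lemma psd_invertible_quadratic_form_eq_0_imp_eq_0:
  fixes A :: "real^'n^'n"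
  assumes "transpose A = A" and "\<And>v. 0 \<le> v \<bullet> (A *v v)" and "invertible A"
    and "v \<bullet> (A *v v) = 0"
  shows "v = 0"
proof -
  from \<open>invertible A\<close> obtain B where "B ** A = mat 1" unfolding invertible_def by blast
  then have "v = B *v (A *v v)" by (simp add: matrix_vector_mul_assoc)
  then show ?thesis using psd_quadratic_form_eq_0_imp_mult_eq_0[OF assms(1,2,4)] by simp
qed

lemma quadratic_form_complete_square:
  fixes A :: "real^'n^'n"
  assumes "transpose A = A" and "A *v s = - n"
  shows "v \<bullet> (A *v v) + 2 * (v \<bullet> n)
       = s \<bullet> (A *v s) + 2 * (s \<bullet> n) + (v - s) \<bullet> (A *v (v - s))"
  using assms(2) inner_matrix_vector_mult_commute[OF assms(1), of v s]
  by (simp add: inner_commute algebra_simps)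

text \<open>\<open>tr(G\<^sup>T A G) + 2 tr(G\<^sup>T N)\<close>, written column by column.\<close>
definition matrix_quadratic :: "real^'k^'k \<Rightarrow> real^'d^'k \<Rightarrow> real^'d^'k \<Rightarrow> real" where
  "matrix_quadratic A N G =
     (\<Sum>i\<in>UNIV. column i G \<bullet> (A *v column i G) + 2 * (column i G \<bullet> column i N))"

lemma column_matrix_matrix_mult: "column i (A ** B) = A *v column i B"
  by (simp add: column_def matrix_matrix_mult_def matrix_vector_mult_def vec_eq_iff)

lemma matrix_mult_matrix_inv:
  assumes "invertible A"
  shows "A ** matrix_inv A = mat 1"
  using assms unfolding invertible_def matrix_inv_def by (rule someI2_ex) blast

lemma matrix_mult_uminus_right: "(A::real^'n^'m) ** (- B) = - (A ** B)"
  by (simp add: matrix_matrix_mult_def vec_eq_iff sum_negf)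

lemma argmin_matrix_quadratic:
  fixes A :: "real^'k^'k" and N :: "real^'d^'k"
  assumes sym: "transpose A = A" and psd: "\<And>v. 0 \<le> v \<bullet> (A *v v)" and inv: "invertible A"
  shows "argmin_set (matrix_quadratic A N) = {- (matrix_inv A ** N)}"
proof -
  define S where "S = - (matrix_inv A ** N)"
  define excess where "excess G = (\<Sum>i\<in>UNIV. column i (G - S) \<bullet> (A *v column i (G - S)))" for G
  have "A ** S = - N"
    by (simp add: S_def matrix_mul_assoc matrix_mult_matrix_inv[OF inv] matrix_mult_uminus_right)
  then have S_column: "A *v column i S = - column i N" for i
    using column_matrix_matrix_mult[of i A S] by (simp add: column_def vec_eq_iff)
  have quadratic_split: "matrix_quadratic A N G = matrix_quadratic A N S + excess G" for G
  proof -
    have "column i (G - S) = column i G - column i S" for i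
      by (simp add: column_def vec_eq_iff)
    then have "column i G \<bullet> (A *v column i G) + 2 * (column i G \<bullet> column i N)
        = (column i S \<bullet> (A *v column i S) + 2 * (column i S \<bullet> column i N))
          + column i (G - S) \<bullet> (A *v column i (G - S))" for i
      using quadratic_form_complete_square[OF sym S_column, of "column i G"] by simp
    then show ?thesis
      unfolding matrix_quadratic_def excess_def sum.distrib[symmetric] by simp
  qed
  have excess_nonneg: "0 \<le> excess G" for G
    unfolding excess_def by (intro sum_nonneg psd)
  have excess_eq_0_iff: "excess G = 0 \<longleftrightarrow> G = S" for G
  proof
    assume "excess G = 0"
    then have "column i (G - S) \<bullet> (A *v column i (G - S)) = 0" for i
      using psd unfolding excess_def by (simp add: sum_nonneg_eq_0_iff)
    then have "column i (G - S) = 0" for i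
      using psd_invertible_quadratic_form_eq_0_imp_eq_0[OF sym psd inv] by blast
    then show "G = S"
      by (simp add: column_def vec_eq_iff)
  qed (simp add: excess_def column_def zero_vec_def[symmetric])
  have "matrix_quadratic A N S \<le> matrix_quadratic A N G" for G
    using quadratic_split[of G] excess_nonneg[of G] by linarith
  moreover have "G = S" if "\<forall>H. matrix_quadratic A N G \<le> matrix_quadratic A N H" for G
  proof -
    have "excess G \<le> 0"
      using that[rule_format, of S] quadratic_split[of G] by linarith
    then show "G = S"
      using excess_nonneg[of G] excess_eq_0_iff[of G] by linarith
  qed
  ultimately show ?thesis
    unfolding S_def[symmetric] argmin_set_def by blast
qed

lemma argmin_set_divide_shift:
  fixes f :: "'a \<Rightarrow> real"
  assumes "c > 0"
  shows "argmin_set (\<lambda>x. (f x + b) / c) = argmin_set f"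
  using assms unfolding argmin_set_def by (simp add: divide_le_cancel)

lemma sum_inner_columns: "(\<Sum>i\<in>UNIV. column i G \<bullet> column i H) = (\<Sum>j\<in>UNIV. G $ j \<bullet> H $ j)"
  unfolding inner_vec_def column_def by simp (rule sum.swap)

lemma sum_inner_column_matrix_vector_mult:
  "(\<Sum>i\<in>UNIV. column i G \<bullet> (M *v column i G)) = (\<Sum>j\<in>UNIV. \<Sum>l\<in>UNIV. M $ j $ l * (G $ j \<bullet> G $ l))"
proof -
  have "(\<Sum>i\<in>UNIV. column i G \<bullet> (M *v column i G))
      = (\<Sum>i\<in>UNIV. \<Sum>j\<in>UNIV. \<Sum>l\<in>UNIV. M $ j $ l * (G $ j $ i * G $ l $ i))"
    unfolding inner_vec_def column_def matrix_vector_mult_def by (simp add: sum_distrib_left mult_ac)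
  also have "\<dots> = (\<Sum>j\<in>UNIV. \<Sum>i\<in>UNIV. \<Sum>l\<in>UNIV. M $ j $ l * (G $ j $ i * G $ l $ i))"
    by (rule sum.swap)
  also have "\<dots> = (\<Sum>j\<in>UNIV. \<Sum>l\<in>UNIV. \<Sum>i\<in>UNIV. M $ j $ l * (G $ j $ i * G $ l $ i))"
    by (rule sum.cong[OF refl]) (rule sum.swap)
  also have "\<dots> = (\<Sum>j\<in>UNIV. \<Sum>l\<in>UNIV. M $ j $ l * (G $ j \<bullet> G $ l))"
    by (simp add: inner_vec_def sum_distrib_left)
  finally show ?thesis .
qed

lemma frob_sq_eq_sum_inner_rows: "frob_sq G = (\<Sum>j\<in>UNIV. G $ j \<bullet> G $ j)"
  by (simp add: frob_sq_def inner_vec_def power2_eq_square)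

lemma transpose_kmat:
  assumes "kernel_symmetric \<kappa>"
  shows "transpose (kmat \<kappa> x) = kmat \<kappa> x"
  using assms by (simp add: transpose_def kmat_def kernel_symmetric_def)

lemma kmat_psd:
  fixes \<kappa> :: "real^'d \<Rightarrow> real^'d \<Rightarrow> real" and x :: "'k::finite \<Rightarrow> real^'d"
  assumes "kernel_psd \<kappa>"
  shows "0 \<le> v \<bullet> (kmat \<kappa> x *v v)"
proof -
  define F where "F i j = v $ i * v $ j * \<kappa> (x i) (x j)" for i j
  obtain h where h: "bij_betw h {..<CARD('k)} (UNIV::'k set)"
    using ex_bij_betw_nat_finite[of "UNIV::'k set"] by (auto simp: lessThan_atLeast0)
  have reindex: "(\<Sum>i<CARD('k). g (h i)) = (\<Sum>i\<in>UNIV. g i)" for g :: "'k \<Rightarrow> real"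
    using sum.reindex_bij_betw[OF h] .
  have "0 \<le> (\<Sum>i<CARD('k). \<Sum>j<CARD('k). F (h i) (h j))"
    using assms[unfolded kernel_psd_def, rule_format,
        where n="CARD('k)" and xs="x \<circ> h" and c="\<lambda>i. v $ h i"]
    by (simp add: F_def)
  also have "\<dots> = (\<Sum>i<CARD('k). \<Sum>j\<in>UNIV. F (h i) j)"
    by (rule sum.cong[OF refl]) (rule reindex)
  also have "\<dots> = (\<Sum>i\<in>UNIV. \<Sum>j\<in>UNIV. F i j)"
    by (rule reindex)
  also have "\<dots> = v \<bullet> (kmat \<kappa> x *v v)"
    unfolding F_def inner_vec_def matrix_vector_mult_def kmat_def
    by (simp add: sum_distrib_left mult_ac)
  finally show ?thesis .
qed

lemma grad1_eq_grad2_swap: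
  assumes "kernel_symmetric \<kappa>"
  shows "grad1 \<kappa> a b = grad2 \<kappa> b a"
  using assms unfolding grad1_def grad2_def kernel_symmetric_def by simp

lemma ksd_V_plus_regulariser_eq:
  fixes \<kappa> :: "real^'d \<Rightarrow> real^'d \<Rightarrow> real" and x :: "'k::finite \<Rightarrow> real^'d"
  assumes "kernel_symmetric \<kappa>"
  shows "ksd_V \<kappa> x G + \<eta> / (real CARD('k))\<^sup>2 * frob_sq G
    = (matrix_quadratic (kmat \<kappa> x + \<eta> *\<^sub>R mat 1) (nabla_kmat \<kappa> x) G
        + (\<Sum>j\<in>UNIV. \<Sum>l\<in>UNIV. mtrace (grad12 \<kappa> (x j) (x l)))) / (real CARD('k))\<^sup>2"
proof -
  let ?K = "kmat \<kappa> x" and ?N = "nabla_kmat \<kappa> x"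
  have quadratic: "(\<Sum>j\<in>UNIV. \<Sum>l\<in>UNIV. G $ j \<bullet> (?K $ j $ l *\<^sub>R G $ l)) + \<eta> * frob_sq G
      = (\<Sum>i\<in>UNIV. column i G \<bullet> ((?K + \<eta> *\<^sub>R mat 1) *v column i G))"
  proof -
    have "column i G \<bullet> ((?K + \<eta> *\<^sub>R mat 1) *v column i G)
        = column i G \<bullet> (?K *v column i G) + \<eta> * (column i G \<bullet> column i G)" for i
      by (simp add: matrix_vector_mult_add_rdistrib scaleR_matrix_vector_assoc[symmetric]
          inner_add_right)
    then show ?thesis
      by (simp add: sum.distrib sum_distrib_left[symmetric] sum_inner_column_matrix_vector_mult
          sum_inner_columns frob_sq_eq_sum_inner_rows)
  qed
  have linear: "(\<Sum>j\<in>UNIV. \<Sum>l\<in>UNIV. G $ j \<bullet> grad2 \<kappa> (x j) (x l))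
      = (\<Sum>i\<in>UNIV. column i G \<bullet> column i ?N)"
  proof -
    have "?N $ j = (\<Sum>l\<in>UNIV. grad2 \<kappa> (x j) (x l))" for j
      by (simp add: nabla_kmat_def vec_eq_iff sum_component)
    then show ?thesis
      by (simp add: sum_inner_columns inner_sum_right)
  qed
  have linear_swapped: "(\<Sum>j\<in>UNIV. \<Sum>l\<in>UNIV. grad1 \<kappa> (x j) (x l) \<bullet> G $ l)
      = (\<Sum>j\<in>UNIV. \<Sum>l\<in>UNIV. G $ j \<bullet> grad2 \<kappa> (x j) (x l))"
  proof -
    have "(\<Sum>j\<in>UNIV. \<Sum>l\<in>UNIV. grad1 \<kappa> (x j) (x l) \<bullet> G $ l)
        = (\<Sum>j\<in>UNIV. \<Sum>l\<in>UNIV. G $ l \<bullet> grad2 \<kappa> (x l) (x j))"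
      by (simp add: grad1_eq_grad2_swap[OF assms] inner_commute)
    also have "\<dots> = (\<Sum>j\<in>UNIV. \<Sum>l\<in>UNIV. G $ j \<bullet> grad2 \<kappa> (x j) (x l))"
      by (rule sum.swap)
    finally show ?thesis .
  qed
  have "matrix_quadratic (?K + \<eta> *\<^sub>R mat 1) ?N G
      = (\<Sum>j\<in>UNIV. \<Sum>l\<in>UNIV. G $ j \<bullet> (?K $ j $ l *\<^sub>R G $ l)) + \<eta> * frob_sq G
        + 2 * (\<Sum>j\<in>UNIV. \<Sum>l\<in>UNIV. G $ j \<bullet> grad2 \<kappa> (x j) (x l))"
    unfolding matrix_quadratic_def quadratic linear by (simp add: sum.distrib sum_distrib_left)
  then show ?thesis
    unfolding ksd_V_def sum.distrib linear_swapped by (simp add: field_simps)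
qed

theorem theorem1:
  fixes \<kappa> :: "real^'d \<Rightarrow> real^'d \<Rightarrow> real"
    and x :: "'k::finite \<Rightarrow> real^'d"
    and \<eta> :: real
  assumes "kernel_symmetric \<kappa>"
    and "kernel_psd \<kappa>"
    and "kernel_C2 \<kappa>"
    and "\<eta> \<ge> 0"
    and "invertible (kmat \<kappa> x + \<eta> *\<^sub>R mat 1)"
  shows "argmin_set (\<lambda>G. ksd_V \<kappa> x G + \<eta> / (real CARD('k))\<^sup>2 * frob_sq G)
           = {stein_estimator \<kappa> x \<eta>}"
proof -
  let ?A = "kmat \<kappa> x + \<eta> *\<^sub>R mat 1" and ?N = "nabla_kmat \<kappa> x"
  have "transpose ?A = ?A"
    using transpose_kmat[OF assms(1), of x] by (simp add: transpose_def vec_eq_iff mat_def)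
  moreover have "0 \<le> v \<bullet> (?A *v v)" for v
    using kmat_psd[OF assms(2), of v x] \<open>\<eta> \<ge> 0\<close>
    by (simp add: matrix_vector_mult_add_rdistrib scaleR_matrix_vector_assoc[symmetric] inner_add_right)
  ultimately have "argmin_set (matrix_quadratic ?A ?N) = {stein_estimator \<kappa> x \<eta>}"
    using argmin_matrix_quadratic[OF _ _ assms(5)] by (simp add: stein_estimator_def)
  then show ?thesis
    by (simp only: ksd_V_plus_regulariser_eq[OF assms(1)] argmin_set_divide_shift zero_less_power
        of_nat_0_less_iff zero_less_card_finite)
qed

end
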